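(* Let $0<\upsilon<1/2$. For each $m=1,2,\dots$ let $\alpha_m,\beta_m>0$ with $\alpha_m+\beta_m=m$, and let $\mu_m$ be the truncated $\mathrm{Beta}(\alpha_m,\beta_m)$ probability measure on $[\upsilon,1-\upsilon]$, i.e., the standard $\mathrm{Beta}(\alpha_m,\beta_m)$ probability measure on $[0,1]$ restricted to $[\upsilon,1-\upsilon]$ and normalized. Let $I\subseteq[\upsilon,1-\upsilon]$ be a sub-interval containing $\theta$ in its interior. If $\left|\frac{\alpha_m}{m}-\theta\right|=\frac{o(\log m)}{\sqrt m}$ as $m\to\infty$, then $\inf_{m\ge1}\mu_m(I)>0$. *)

theory Defs
  imports "HOL-Probability.Probability" "HOL-Library.Landau_Symbols"
begin

definition beta_density :: "real \<Rightarrow> real \<Rightarrow> real \<Rightarrow> real" where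
  "beta_density a b x =
     (if 0 < x \<and> x < 1 then x powr (a - 1) * (1 - x) powr (b - 1) / Beta a b else 0)"

definition beta_measure :: "real \<Rightarrow> real \<Rightarrow> real measure" where
  "beta_measure a b = density lborel (\<lambda>x. ennreal (beta_density a b x))"

definition trunc_beta_measure :: "real \<Rightarrow> real \<Rightarrow> real \<Rightarrow> real measure" where
  "trunc_beta_measure u a b =
     density lborel (\<lambda>x. ennreal (indicator {u..1-u} x * beta_density a b x
                                    / measure (beta_measure a b) {u..1-u}))"

end

theory Submission
  imports Defs "HOL-Real_Asymp.Real_Asymp"
begin

text \<open>The Beta density is \<open>x\<^sup>a (1 - x)\<^sup>b / (x (1 - x) B(a, b))\<close>, and on \<open>[\<upsilon>, 1 - \<upsilon>]\<close> the
  factor \<open>1 / (x (1 - x))\<close> lies between \<open>4\<close> and \<open>1 / (\<upsilon> (1 - \<upsilon>))\<close>. Hence \<open>\<mu>\<^sub>m(I)\<close> is at least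
  \<open>4 \<upsilon> (1 - \<upsilon>)\<close> times the ratio of the integrals of the kernel \<open>x\<^sup>a (1 - x)\<^sup>b\<close> over a
  window of fixed half-width \<open>L\<close> around its mode \<open>a / (a + b)\<close> and over \<open>[\<upsilon>, 1 - \<upsilon>]\<close>.
  As the kernel is unimodal, this ratio is at least \<open>1 / (1 + (1 - 2\<upsilon>) / L)\<close>. The rate
  hypothesis is used only through its consequence \<open>\<alpha>\<^sub>m / m \<longrightarrow> \<theta>\<close>: it puts the window inside
  \<open>I\<close> for all large \<open>m\<close>, and each of the finitely many remaining \<open>\<mu>\<^sub>m(I)\<close> is positive.\<close>

text \<open>This is \<open>x\<^sup>a (1 - x)\<^sup>b\<close> for \<open>0 < x < 1\<close>; the exponents \<open>a, b\<close> rather than \<open>a - 1, b - 1\<close>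
  put its mode exactly at \<open>a / (a + b)\<close>.\<close>
definition beta_kernel :: "real \<Rightarrow> real \<Rightarrow> real \<Rightarrow> real" where
  "beta_kernel a b x = exp (a * ln x + b * ln (1 - x))"

lemma beta_kernel_pos: "beta_kernel a b x > 0"
  unfolding beta_kernel_def by simp

lemma continuous_on_beta_kernel: "continuous_on {0<..<1} (beta_kernel a b)"
  unfolding beta_kernel_def by (intro continuous_intros) auto

lemma beta_kernel_integrable_on:
  assumes "0 < c" "d < 1"
  shows "beta_kernel a b integrable_on {c..d}"
  using assms
  by (intro integrable_continuous_interval continuous_on_subset[OF continuous_on_beta_kernel]) auto

lemma has_real_derivative_ln_beta_kernel:
  assumes "0 < t" "t < 1"
  shows "((\<lambda>x. a * ln x + b * ln (1 - x)) has_real_derivative (a / t - b / (1 - t))) (at t)"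
  using assms by (auto intro!: derivative_eq_intros simp: field_simps)

lemma beta_kernel_mono_below_mode:
  assumes "a > 0" "b > 0" "0 < x" "x \<le> y" "y \<le> a / (a + b)"
  shows "beta_kernel a b x \<le> beta_kernel a b y"
proof -
  have "a / (a + b) < 1"
    using assms by simp
  have "a * ln x + b * ln (1 - x) \<le> a * ln y + b * ln (1 - y)"
  proof (rule DERIV_nonneg_imp_nondecreasing[OF \<open>x \<le> y\<close>])
    fix t assume t: "x \<le> t" "t \<le> y"
    have "0 < t" "t < 1"
      using t assms \<open>a / (a + b) < 1\<close> by linarith+
    have "t * (a + b) \<le> y * (a + b)"
      using t assms by (intro mult_right_mono) auto
    also have "\<dots> \<le> a"
      using assms by (simp add: field_simps)
    finally have "t * (a + b) \<le> a" .
    then have "a / t - b / (1 - t) \<ge> 0"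
      using \<open>0 < t\<close> \<open>t < 1\<close> by (simp add: field_simps)
    then show "\<exists>y. ((\<lambda>x. a * ln x + b * ln (1 - x)) has_real_derivative y) (at t) \<and> 0 \<le> y"
      using has_real_derivative_ln_beta_kernel \<open>0 < t\<close> \<open>t < 1\<close> by blast
  qed
  then show ?thesis
    unfolding beta_kernel_def by simp
qed

lemma beta_kernel_antimono_above_mode:
  assumes "a > 0" "b > 0" "a / (a + b) \<le> x" "x \<le> y" "y < 1"
  shows "beta_kernel a b y \<le> beta_kernel a b x"
proof -
  have "0 < a / (a + b)"
    using assms by simp
  have "a * ln y + b * ln (1 - y) \<le> a * ln x + b * ln (1 - x)"
  proof (rule DERIV_nonpos_imp_nonincreasing[OF \<open>x \<le> y\<close>])
    fix t assume t: "x \<le> t" "t \<le> y"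
    have "0 < t" "t < 1"
      using t assms \<open>0 < a / (a + b)\<close> by linarith+
    have "a \<le> x * (a + b)"
      using assms by (simp add: field_simps)
    also have "\<dots> \<le> t * (a + b)"
      using t assms by (intro mult_right_mono) auto
    finally have "a \<le> t * (a + b)" .
    then have "a / t - b / (1 - t) \<le> 0"
      using \<open>0 < t\<close> \<open>t < 1\<close> by (simp add: field_simps)
    then show "\<exists>y. ((\<lambda>x. a * ln x + b * ln (1 - x)) has_real_derivative y) (at t) \<and> y \<le> 0"
      using has_real_derivative_ln_beta_kernel \<open>0 < t\<close> \<open>t < 1\<close> by blast
  qed
  then show ?thesis
    unfolding beta_kernel_def by simp
qed

lemma beta_kernel_ge_min:
  assumes "a > 0" "b > 0" "0 < c" "c \<le> x" "x \<le> d" "d < 1"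
  shows "min (beta_kernel a b c) (beta_kernel a b d) \<le> beta_kernel a b x"
proof (cases "x \<le> a / (a + b)")
  case True
  then show ?thesis
    using assms beta_kernel_mono_below_mode[of a b c x] by simp
next
  case False
  then show ?thesis
    using assms beta_kernel_antimono_above_mode[of a b x d] by simp
qed

lemma beta_kernel_integral_pos:
  assumes "a > 0" "b > 0" "0 < c" "c < d" "d < 1"
  shows "integral {c..d} (beta_kernel a b) > 0"
proof -
  let ?m = "min (beta_kernel a b c) (beta_kernel a b d)"
  have "0 < ?m * (d - c)"
    using assms beta_kernel_pos[of a b] by simp
  also have "\<dots> = integral {c..d} (\<lambda>_. ?m)"
    using assms by simp
  also have "\<dots> \<le> integral {c..d} (beta_kernel a b)"
    using assms beta_kernel_ge_min[of a b c _ d]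
    by (intro integral_le beta_kernel_integrable_on) auto
  finally show ?thesis .
qed

text \<open>Outside the window of half-width \<open>L\<close> around the mode, the kernel is bounded by its values
  at the window's ends, and each of these values times \<open>L\<close> is at most the integral over the
  corresponding half of the window.\<close>
lemma beta_kernel_integral_le_window:
  fixes a b :: real
  defines "p \<equiv> a / (a + b)"
  assumes "a > 0" "b > 0" "L > 0" "0 < c" "d < 1"
    and "c \<le> p - L" "p + L \<le> d"
  shows "integral {c..d} (beta_kernel a b) \<le> (1 + (d - c) / L) * integral {p - L..p + L} (beta_kernel a b)"
proof -
  let ?g = "beta_kernel a b" and ?l = "p - L" and ?r = "p + L"
  let ?W = "integral {?l..?r} ?g"
  have int: "?g integrable_on {s..t}" if "c \<le> s" "t \<le> d" for s t
    using that assms by (intro beta_kernel_integrable_on) auto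
  have ord: "c \<le> ?l" "?l \<le> p" "p \<le> ?r" "?r \<le> d"
    using assms by auto
  have left: "integral {c..?l} ?g \<le> ?g ?l * (d - c)"
  proof -
    have "integral {c..?l} ?g \<le> integral {c..?l} (\<lambda>_. ?g ?l)"
      using assms ord int[of c ?l]
      by (intro integral_le beta_kernel_mono_below_mode) auto
    also have "\<dots> \<le> ?g ?l * (d - c)"
      using ord beta_kernel_pos[of a b ?l] by (simp add: mult.commute)
    finally show ?thesis .
  qed
  have right: "integral {?r..d} ?g \<le> ?g ?r * (d - c)"
  proof -
    have "integral {?r..d} ?g \<le> integral {?r..d} (\<lambda>_. ?g ?r)"
      using assms ord int[of ?r d]
      by (intro integral_le beta_kernel_antimono_above_mode) auto
    also have "\<dots> \<le> ?g ?r * (d - c)"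
      using ord beta_kernel_pos[of a b ?r] by (simp add: mult.commute)
    finally show ?thesis .
  qed
  have window: "L * (?g ?l + ?g ?r) \<le> ?W"
  proof -
    have "integral {?l..p} (\<lambda>_. ?g ?l) \<le> integral {?l..p} ?g"
      using assms ord int[of ?l p]
      by (intro integral_le beta_kernel_mono_below_mode) auto
    moreover have "integral {p..?r} (\<lambda>_. ?g ?r) \<le> integral {p..?r} ?g"
      using assms ord int[of p ?r]
      by (intro integral_le beta_kernel_antimono_above_mode) auto
    moreover have "integral {?l..p} ?g + integral {p..?r} ?g = ?W"
      using ord int[of ?l ?r] by (intro Henstock_Kurzweil_Integration.integral_combine) auto
    ultimately show ?thesis
      using ord by (simp add: distrib_left)
  qed
  have "integral {c..?l} ?g + integral {?l..d} ?g = integral {c..d} ?g"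
    using ord int[of c d] by (intro Henstock_Kurzweil_Integration.integral_combine) auto
  moreover have "?W + integral {?r..d} ?g = integral {?l..d} ?g"
    using ord int[of ?l d] by (intro Henstock_Kurzweil_Integration.integral_combine) auto
  ultimately have "integral {c..d} ?g \<le> (?g ?l + ?g ?r) * (d - c) + ?W"
    using left right by (simp add: distrib_right)
  also have "(?g ?l + ?g ?r) * (d - c) \<le> ?W / L * (d - c)"
    using window ord assms(4) by (intro mult_right_mono) (simp_all add: field_simps)
  finally show ?thesis
    by (simp add: algebra_simps)
qed

lemma Beta_real_pos: "a > 0 \<Longrightarrow> b > 0 \<Longrightarrow> Beta a b > (0::real)"
  unfolding Beta_def by simp

lemma beta_density_nonneg: "a > 0 \<Longrightarrow> b > 0 \<Longrightarrow> 0 \<le> beta_density a b x"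
  using Beta_real_pos[of a b] unfolding beta_density_def by auto

lemma borel_measurable_beta_density [measurable]: "beta_density a b \<in> borel_measurable borel"
  unfolding beta_density_def by measurable

lemma beta_density_eq_kernel:
  assumes "0 < x" "x < 1"
  shows "beta_density a b x = beta_kernel a b x / (x * (1 - x) * Beta a b)"
proof -
  have "x powr (a - 1) * (1 - x) powr (b - 1) = exp (a * ln x + b * ln (1 - x) - (ln x + ln (1 - x)))"
    using assms by (simp add: powr_def exp_add[symmetric] algebra_simps)
  also have "\<dots> = beta_kernel a b x / (x * (1 - x))"
    using assms by (simp add: beta_kernel_def exp_diff exp_add)
  finally show ?thesis
    using assms by (simp add: beta_density_def)
qed

lemma beta_density_integrable_on:
  assumes "a > 0" "b > 0" "0 < c" "d < 1"
  shows "beta_density a b integrable_on {c..d}"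
proof -
  have "continuous_on {c..d} (\<lambda>x. x powr (a - 1) * (1 - x) powr (b - 1) / Beta a b)"
    using assms Beta_real_pos[of a b] by (intro continuous_intros) auto
  then have "(\<lambda>x. x powr (a - 1) * (1 - x) powr (b - 1) / Beta a b) integrable_on {c..d}"
    by (rule integrable_continuous_interval)
  then show ?thesis
    using assms by (subst integrable_cong[where g = "\<lambda>x. x powr (a - 1) * (1 - x) powr (b - 1) / Beta a b"])
      (auto simp: beta_density_def)
qed

lemma beta_density_ge_kernel:
  assumes "a > 0" "b > 0" "0 < x" "x < 1"
  shows "4 / Beta a b * beta_kernel a b x \<le> beta_density a b x"
proof -
  have "x * (1 - x) \<le> 1 / 4"
    using sum_power2_ge_zero[of "x - 1/2" 0] by (simp add: power2_eq_square algebra_simps)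
  then have "4 * beta_kernel a b x * (x * (1 - x)) \<le> 4 * beta_kernel a b x * (1 / 4)"
    using beta_kernel_pos[of a b x] by (intro mult_left_mono) auto
  then have "4 * beta_kernel a b x \<le> beta_kernel a b x / (x * (1 - x))"
    using assms by (simp add: pos_le_divide_eq)
  then have "4 * beta_kernel a b x / Beta a b \<le> beta_kernel a b x / (x * (1 - x)) / Beta a b"
    using assms Beta_real_pos[of a b] by (intro divide_right_mono) auto
  then show ?thesis
    using assms by (simp add: beta_density_eq_kernel)
qed

lemma beta_density_le_kernel:
  assumes "a > 0" "b > 0" "0 < u" "x \<in> {u..1-u}"
  shows "beta_density a b x \<le> beta_kernel a b x / (u * (1 - u) * Beta a b)"
proof -
  have "u * (1 - u) \<le> x * (1 - x)"
    using assms mult_nonneg_nonneg[of "x - u" "1 - u - x"] by (simp add: algebra_simps)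
  moreover have "0 < u * (1 - u)"
    using assms by auto
  ultimately show ?thesis
    using assms Beta_real_pos[of a b] beta_kernel_pos[of a b x]
    by (simp add: beta_density_eq_kernel frac_le)
qed

lemma beta_density_integral_pos:
  assumes "a > 0" "b > 0" "0 < c" "c < d" "d < 1"
  shows "integral {c..d} (beta_density a b) > 0"
proof -
  have "0 < 4 / Beta a b * integral {c..d} (beta_kernel a b)"
    using assms Beta_real_pos[of a b] beta_kernel_integral_pos[of a b c d] by simp
  also have "\<dots> = integral {c..d} (\<lambda>x. 4 / Beta a b * beta_kernel a b x)"
    by simp
  also have "\<dots> \<le> integral {c..d} (beta_density a b)"
    using assms
    by (intro integral_le integrable_on_mult_right beta_kernel_integrable_on
        beta_density_integrable_on beta_density_ge_kernel) auto
  finally show ?thesis .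
qed

lemma emeasure_beta_measure_interval:
  assumes "a > 0" "b > 0" "0 < c" "d < 1"
  shows "emeasure (beta_measure a b) {c..d} = ennreal (integral {c..d} (beta_density a b))"
proof -
  have "emeasure (beta_measure a b) {c..d} = (\<integral>\<^sup>+x. ennreal (beta_density a b x) * indicator {c..d} x \<partial>lborel)"
    unfolding beta_measure_def by (intro emeasure_density) auto
  also have "\<dots> = ennreal (integral {c..d} (beta_density a b))"
    using assms beta_density_nonneg[of a b]
    by (intro nn_integral_has_integral_lebesgue' integrable_integral beta_density_integrable_on) auto
  finally show ?thesis .
qed

lemma measure_beta_measure_interval:
  assumes "a > 0" "b > 0" "0 < c" "d < 1"
  shows "measure (beta_measure a b) {c..d} = integral {c..d} (beta_density a b)"
  using assms beta_density_nonneg[of a b]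
  by (simp add: measure_def emeasure_beta_measure_interval integral_nonneg beta_density_integrable_on)

lemma emeasure_trunc_beta_measure_interval:
  assumes "a > 0" "b > 0" "0 < u" "u \<le> c" "d \<le> 1 - u"
  shows "emeasure (trunc_beta_measure u a b) {c..d}
    = ennreal (integral {c..d} (beta_density a b) / integral {u..1-u} (beta_density a b))"
proof -
  define D where "D = integral {u..1-u} (beta_density a b)"
  have D: "measure (beta_measure a b) {u..1-u} = D"
    unfolding D_def using assms by (intro measure_beta_measure_interval) auto
  have "emeasure (trunc_beta_measure u a b) {c..d}
      = (\<integral>\<^sup>+x. ennreal (indicator {u..1-u} x * beta_density a b x / D) * indicator {c..d} x \<partial>lborel)"
    unfolding trunc_beta_measure_def D by (intro emeasure_density) auto
  also have "\<dots> = (\<integral>\<^sup>+x. ennreal (beta_density a b x / D) * indicator {c..d} x \<partial>lborel)"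
    using assms by (intro nn_integral_cong) (auto split: split_indicator)
  also have "\<dots> = ennreal (integral {c..d} (beta_density a b) / D)"
    using assms beta_density_nonneg[of a b] integral_nonneg[of "beta_density a b" "{u..1-u}"]
    by (intro nn_integral_has_integral_lebesgue' has_integral_divide integrable_integral
        beta_density_integrable_on) (auto simp: D_def beta_density_integrable_on)
  finally show ?thesis
    unfolding D_def .
qed

lemma prob_space_trunc_beta_measure:
  assumes "a > 0" "b > 0" "0 < u" "u < 1/2"
  shows "prob_space (trunc_beta_measure u a b)"
proof
  let ?M = "trunc_beta_measure u a b"
  let ?F = "\<lambda>x. ennreal (indicator {u..1-u} x * beta_density a b x
                          / measure (beta_measure a b) {u..1-u})"
  have density: "emeasure ?M A = (\<integral>\<^sup>+x. ?F x * indicator A x \<partial>lborel)" if "A \<in> sets borel" for A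
    unfolding trunc_beta_measure_def using that by (intro emeasure_density) auto
  have "UNIV \<in> sets borel"
    by simp
  have "emeasure ?M UNIV = emeasure ?M {u..1-u}"
    unfolding density[OF \<open>UNIV \<in> sets borel\<close>] density[OF atLeastAtMost_borel]
    by (auto intro!: nn_integral_cong split: split_indicator)
  also have "\<dots> = 1"
    using assms beta_density_integral_pos[of a b u "1 - u"]
    by (simp add: emeasure_trunc_beta_measure_interval)
  finally show "emeasure ?M (space ?M) = 1"
    unfolding trunc_beta_measure_def by simp
qed

lemma measure_trunc_beta_measure_ge:
  assumes "a > 0" "b > 0" "0 < u" "u < 1/2"
    and "I \<in> sets borel" "I \<subseteq> {u..1-u}" "c \<le> d" "{c..d} \<subseteq> I"
  shows "4 * u * (1 - u) * integral {c..d} (beta_kernel a b) / integral {u..1-u} (beta_kernel a b)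
    \<le> measure (trunc_beta_measure u a b) I"
proof -
  let ?B = "Beta a b" and ?g = "beta_kernel a b" and ?f = "beta_density a b"
  have "{c..d} \<subseteq> {u..1-u}"
    using assms(6,8) by blast
  then have cd: "u \<le> c" "d \<le> 1 - u"
    using \<open>c \<le> d\<close> by auto
  have B: "?B > 0"
    using assms Beta_real_pos by auto
  have J: "4 / ?B * integral {c..d} ?g \<le> integral {c..d} ?f"
    using assms cd
    by (subst integral_mult_right[symmetric])
       (intro integral_le integrable_on_mult_right beta_kernel_integrable_on
         beta_density_integrable_on beta_density_ge_kernel; auto)
  have S: "integral {u..1-u} ?f \<le> integral {u..1-u} ?g / (u * (1 - u) * ?B)"
    using assms
    by (subst integral_divide[symmetric])
       (intro integral_le integrable_on_divide beta_kernel_integrable_on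
         beta_density_integrable_on beta_density_le_kernel; auto)
  have S_pos: "0 < integral {u..1-u} ?f"
    using assms by (intro beta_density_integral_pos) auto
  have J_nonneg: "0 \<le> integral {c..d} ?f"
    using assms cd beta_density_nonneg[of a b]
    by (intro integral_nonneg beta_density_integrable_on) auto
  have "0 < integral {u..1-u} ?g"
    using assms by (intro beta_kernel_integral_pos) auto
  then have "4 * u * (1 - u) * integral {c..d} ?g / integral {u..1-u} ?g
      = 4 / ?B * integral {c..d} ?g / (integral {u..1-u} ?g / (u * (1 - u) * ?B))"
    using B assms by (simp add: field_simps)
  also have "\<dots> \<le> integral {c..d} ?f / integral {u..1-u} ?f"
    using J S S_pos J_nonneg by (intro frac_le) auto
  also have "\<dots> = measure (trunc_beta_measure u a b) {c..d}"
    using assms cd S_pos J_nonneg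
    by (simp add: measure_def emeasure_trunc_beta_measure_interval)
  also have "\<dots> \<le> measure (trunc_beta_measure u a b) I"
  proof -
    interpret prob_space "trunc_beta_measure u a b"
      using assms by (intro prob_space_trunc_beta_measure) auto
    show ?thesis
      using assms by (intro finite_measure_mono) (auto simp: trunc_beta_measure_def)
  qed
  finally show ?thesis .
qed

lemma measure_trunc_beta_measure_pos:
  assumes "a > 0" "b > 0" "0 < u" "u < 1/2"
    and "I \<in> sets borel" "I \<subseteq> {u..1-u}" "c < d" "{c..d} \<subseteq> I"
  shows "0 < measure (trunc_beta_measure u a b) I"
proof -
  have "{c..d} \<subseteq> {u..1-u}"
    using assms(6,8) by blast
  then have "u \<le> c" "d \<le> 1 - u"
    using \<open>c < d\<close> by auto
  then have "0 < 4 * u * (1 - u) * integral {c..d} (beta_kernel a b) / integral {u..1-u} (beta_kernel a b)"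
    using assms beta_kernel_integral_pos[of a b c d] beta_kernel_integral_pos[of a b u "1 - u"]
    by (intro divide_pos_pos mult_pos_pos) auto
  also have "\<dots> \<le> measure (trunc_beta_measure u a b) I"
    using assms by (intro measure_trunc_beta_measure_ge) auto
  finally show ?thesis .
qed

lemma measure_trunc_beta_measure_ge_window:
  fixes a b :: real
  defines "p \<equiv> a / (a + b)"
  assumes "a > 0" "b > 0" "0 < u" "u < 1/2" "L > 0"
    and "I \<in> sets borel" "I \<subseteq> {u..1-u}" "{p - L..p + L} \<subseteq> I"
  shows "4 * u * (1 - u) / (1 + (1 - 2 * u) / L) \<le> measure (trunc_beta_measure u a b) I"
proof -
  let ?K = "1 + (1 - 2 * u) / L" and ?g = "beta_kernel a b"
  let ?W = "integral {p - L..p + L} ?g" and ?S = "integral {u..1-u} ?g"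
  have "{p - L..p + L} \<subseteq> {u..1-u}"
    using assms(8,9) by blast
  then have window: "u \<le> p - L" "p + L \<le> 1 - u"
    using \<open>L > 0\<close> by auto
  have "?S \<le> ?K * ?W"
    using beta_kernel_integral_le_window[of a b L u "1 - u"] assms window by (simp add: p_def)
  have "0 < ?W"
    using assms window by (intro beta_kernel_integral_pos) auto
  have "0 < ?S"
    using assms by (intro beta_kernel_integral_pos) auto
  have "0 < ?K"
    using assms by (auto intro!: add_pos_nonneg divide_nonneg_pos)
  have "4 * u * (1 - u) / ?K = 4 * u * (1 - u) * ?W / (?K * ?W)"
    using \<open>0 < ?W\<close> by simp
  also have "\<dots> \<le> 4 * u * (1 - u) * ?W / ?S"
    using \<open>?S \<le> ?K * ?W\<close> \<open>0 < ?K\<close> \<open>0 < ?S\<close> \<open>0 < ?W\<close> assms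
    by (intro divide_left_mono) auto
  also have "\<dots> \<le> measure (trunc_beta_measure u a b) I"
    using assms window by (intro measure_trunc_beta_measure_ge) auto
  finally show ?thesis .
qed

lemma tendsto_of_dist_smallo_ln_div_sqrt:
  fixes x :: "nat \<Rightarrow> real"
  assumes "(\<lambda>m. \<bar>x m - l\<bar>) \<in> o(\<lambda>m. ln (real m) / sqrt (real m))"
  shows "x \<longlonglongrightarrow> l"
proof -
  have "(\<lambda>m. ln (real m) / sqrt (real m)) \<in> o(\<lambda>_. 1)"
    by real_asymp
  with assms have "(\<lambda>m. \<bar>x m - l\<bar>) \<in> o(\<lambda>_. 1)"
    by (rule landau_o.small.trans)
  then have "(\<lambda>m. \<bar>x m - l\<bar>) \<longlonglongrightarrow> 0"
    using smalloD_tendsto by fastforce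
  then show ?thesis
    by (simp add: LIM_zero_cancel tendsto_rabs_zero_iff)
qed

lemma INF_atLeast_pos:
  fixes f :: "nat \<Rightarrow> real"
  assumes "\<And>m. m \<ge> k \<Longrightarrow> 0 < f m" "0 < c" "eventually (\<lambda>m. c \<le> f m) sequentially"
  shows "0 < (INF m\<in>{k..}. f m)"
proof -
  obtain N where N: "\<And>m. m \<ge> N \<Longrightarrow> c \<le> f m"
    using assms(3) unfolding eventually_sequentially by blast
  define c' where "c' = Min (insert c (f ` {k..<N}))"
  have "0 < c'"
    unfolding c'_def using assms(1,2) by (subst Min_gr_iff) auto
  also have "c' \<le> (INF m\<in>{k..}. f m)"
  proof (rule cINF_greatest)
    fix m assume "m \<in> {k..}"
    show "c' \<le> f m"
    proof (cases "m < N")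
      case True
      then show ?thesis
        unfolding c'_def using \<open>m \<in> {k..}\<close> by (intro Min_le) auto
    next
      case False
      have "c' \<le> c"
        unfolding c'_def by (intro Min_le) auto
      also have "c \<le> f m"
        using N False by simp
      finally show ?thesis .
    qed
  qed auto
  finally show ?thesis .
qed

theorem lemma9:
  fixes \<upsilon> \<theta> :: real and \<alpha> \<beta> :: "nat \<Rightarrow> real" and I :: "real set"
  assumes "0 < \<upsilon>" "\<upsilon> < 1/2"
    and "\<And>m. m \<ge> 1 \<Longrightarrow> \<alpha> m > 0 \<and> \<beta> m > 0 \<and> \<alpha> m + \<beta> m = real m"
    and "is_interval I" "I \<subseteq> {\<upsilon>..1-\<upsilon>}" "\<theta> \<in> interior I"
    and "(\<lambda>m. \<bar>\<alpha> m / real m - \<theta>\<bar>) \<in> o(\<lambda>m. ln (real m) / sqrt (real m))"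
  shows "(INF m\<in>{1..}. measure (trunc_beta_measure \<upsilon> (\<alpha> m) (\<beta> m)) I) > 0"
proof -
  let ?\<mu> = "\<lambda>m. measure (trunc_beta_measure \<upsilon> (\<alpha> m) (\<beta> m)) I"
  have I: "I \<in> sets borel"
    using \<open>is_interval I\<close> by (rule real_interval_borel_measurable)
  obtain e where "e > 0" "cball \<theta> e \<subseteq> I"
    using \<open>\<theta> \<in> interior I\<close> mem_interior_cball by blast
  then have \<theta>_window: "{\<theta> - e..\<theta> + e} \<subseteq> I"
    by (simp add: cball_eq_atLeastAtMost)
  define L where "L = e / 2"
  have "(\<lambda>m. \<alpha> m / real m) \<longlonglongrightarrow> \<theta>"
    using assms(7) by (rule tendsto_of_dist_smallo_ln_div_sqrt)
  then have "eventually (\<lambda>m. dist (\<alpha> m / real m) \<theta> < L \<and> m \<ge> 1) sequentially"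
    using \<open>e > 0\<close> by (intro eventually_conj tendstoD eventually_ge_at_top) (auto simp: L_def)
  then have "eventually (\<lambda>m. 4 * \<upsilon> * (1 - \<upsilon>) / (1 + (1 - 2 * \<upsilon>) / L) \<le> ?\<mu> m) sequentially"
  proof eventually_elim
    case (elim m)
    define p where "p = \<alpha> m / real m"
    have m: "\<alpha> m > 0" "\<beta> m > 0" "\<alpha> m / (\<alpha> m + \<beta> m) = p"
      using elim assms(3) by (auto simp: p_def)
    have "{p - L..p + L} \<subseteq> {\<theta> - e..\<theta> + e}"
      using elim by (auto simp: L_def dist_real_def abs_real_def p_def[symmetric] split: if_splits)
    then show ?case
      using m assms I \<theta>_window \<open>e > 0\<close>
      by (intro measure_trunc_beta_measure_ge_window) (auto simp: L_def)
  qed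
  moreover have "0 < ?\<mu> m" if "m \<ge> 1" for m
    using assms(3)[OF that] assms I \<theta>_window \<open>e > 0\<close>
    by (intro measure_trunc_beta_measure_pos[of _ _ _ _ "\<theta> - e" "\<theta> + e"]) auto
  moreover have "0 < 4 * \<upsilon> * (1 - \<upsilon>) / (1 + (1 - 2 * \<upsilon>) / L)"
    using assms(1,2) \<open>e > 0\<close> by (auto simp: L_def intro!: divide_pos_pos add_pos_nonneg)
  ultimately show ?thesis
    by (intro INF_atLeast_pos) auto
qed

end
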